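(* There is an absolute constant $C$ such that for every graph $G$ with $m$ edges and no isolated vertices, $g_1(G)\le Cm$.
   Context: $F_{N,1}$ is the set of functions $f:E(K_N)\to E(K_N)$ with $|f(e)\cap e|\le 1$ for every $e\in E(K_N)$. For a graph $G$, $g_1(G)$ is the minimum $N$ such that for every $f\in F_{N,1}$ there is a copy $G^*$ of $G$ in $K_N$ with $f(e)\notin E(G^* )$ for every $e\in E(G^* )$. *)

theory Defs
  imports Main Complex_Main
begin

definition is_graph :: "nat set \<Rightarrow> nat set set \<Rightarrow> bool" where
  "is_graph V E \<longleftrightarrow> finite V \<and> (\<forall>e\<in>E. e \<subseteq> V \<and> card e = 2)"

definition no_isolated :: "nat set \<Rightarrow> nat set set \<Rightarrow> bool" where
  "no_isolated V E \<longleftrightarrow> (\<forall>v\<in>V. \<exists>e\<in>E. v \<in> e)"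

definition KN_edges :: "nat \<Rightarrow> nat set set" where
  "KN_edges N = {e. e \<subseteq> {..<N} \<and> card e = 2}"

text \<open>F_{N,1}: functions E(K_N) -> E(K_N) with |f(e) \<inter> e| \<le> 1 (only values on E(K_N) matter).\<close>
definition F_N1 :: "nat \<Rightarrow> (nat set \<Rightarrow> nat set) set" where
  "F_N1 N = {f. \<forall>e\<in>KN_edges N. f e \<in> KN_edges N \<and> card (f e \<inter> e) \<le> 1}"

text \<open>N is good for G: every f in F_{N,1} admits a copy G* of G in K_N (given by an injective
  vertex map phi into {0..N-1}) with f(e) not in E(G*) for all e in E(G*).\<close>
definition g1_good :: "nat set \<Rightarrow> nat set set \<Rightarrow> nat \<Rightarrow> bool" where
  "g1_good V E N \<longleftrightarrow>
     (\<forall>f\<in>F_N1 N. \<exists>\<phi>::nat \<Rightarrow> nat. inj_on \<phi> V \<and> \<phi> ` V \<subseteq> {..<N} \<and>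
        (\<forall>e\<in>(image \<phi>) ` E. f e \<notin> (image \<phi>) ` E))"

definition g1 :: "nat set \<Rightarrow> nat set set \<Rightarrow> nat" where
  "g1 V E = (LEAST N. g1_good V E N)"

end

theory Submission
  imports Defs
begin

(* Take N = 600 |E| and embed the vertices of G into K_N greedily, in order of nonincreasing
   degree. When the next vertex w is placed at x, its new edges {x, phi u} must not clash with
   the edges embedded so far: x must avoid the images f(e) of old edges, the edges that f maps
   onto old edges, and the pivots y with f {y, phi u} = {y, phi u'} for two embedded
   neighbours u, u' of w. The first two kinds exclude O(|E|) points, because every embedded
   vertex has small load (it lies in few images f(p)) and every embedded edge has a small
   fibre under f; these properties are kept by discarding, via Markov's inequality, at most
   N/2 heavy candidates for x. The pivots are controlled by the pivot weight of an unembedded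
   vertex v, which counts pivots between pairs of its embedded neighbours: embedding a
   neighbour of v raises it by at most 72 |U|, and the degree order gives |U| deg v <= 2 |E|,
   so the weight of v is at most 144 |E| when v's turn comes. *)

section \<open>Functions on the edges of K_N\<close>

lemma finite_KN_edges: "finite (KN_edges N)"
  by (rule finite_subset[of _ "Pow {..<N}"]) (auto simp: KN_edges_def)

lemma card_KN_edges_le: "card (KN_edges N) \<le> N * N"
proof -
  have "KN_edges N \<subseteq> (\<lambda>(a, b). {a, b}) ` ({..<N} \<times> {..<N})"
  proof
    fix e assume "e \<in> KN_edges N"
    then have "e \<subseteq> {..<N}" "card e = 2" by (auto simp: KN_edges_def)
    then show "e \<in> (\<lambda>(a, b). {a, b}) ` ({..<N} \<times> {..<N})"
      by (auto simp: card_2_iff)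
  qed
  then have "card (KN_edges N) \<le> card ((\<lambda>(a, b). {a, b}) ` ({..<N} \<times> {..<N}))"
    by (rule card_mono[rotated]) simp
  also have "\<dots> \<le> card ({..<N} \<times> {..<N})" by (rule card_image_le) simp
  finally show ?thesis by (simp add: card_cartesian_product)
qed

lemma doubleton_in_KN_edges: "a < N \<Longrightarrow> b < N \<Longrightarrow> a \<noteq> b \<Longrightarrow> {a, b} \<in> KN_edges N"
  by (auto simp: KN_edges_def)

lemma card_KN_edge: "p \<in> KN_edges N \<Longrightarrow> card p = 2"
  by (simp add: KN_edges_def)

lemma KN_edge_subset: "p \<in> KN_edges N \<Longrightarrow> p \<subseteq> {..<N}"
  by (simp add: KN_edges_def)

lemma F_N1_KN_edges: "f \<in> F_N1 N \<Longrightarrow> p \<in> KN_edges N \<Longrightarrow> f p \<in> KN_edges N"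
  by (simp add: F_N1_def)

lemma F_N1_neq:
  assumes "f \<in> F_N1 N" "p \<in> KN_edges N"
  shows "f p \<noteq> p"
proof
  assume "f p = p"
  moreover have "card (f p \<inter> p) \<le> 1" using assms by (simp add: F_N1_def)
  ultimately show False using card_KN_edge[OF assms(2)] by simp
qed

lemma card_gt_mult_le:
  fixes g :: "'a \<Rightarrow> nat"
  assumes X: "finite X" and sum: "(\<Sum>x\<in>X. g x) \<le> a * b" and t: "a * c \<le> t"
  shows "card {x\<in>X. t < g x} * c \<le> b"
proof (cases "a = 0")
  case True
  with X sum have "{x\<in>X. t < g x} = {}" by auto
  then show ?thesis by (simp only: card.empty mult_0)
next
  case False
  have "a * (card {x\<in>X. t < g x} * c) \<le> (\<Sum>x\<in>{x\<in>X. t < g x}. t)"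
    using t by (simp add: mult.left_commute)
  also have "\<dots> \<le> (\<Sum>x\<in>{x\<in>X. t < g x}. g x)" by (rule sum_mono) simp
  also have "\<dots> \<le> (\<Sum>x\<in>X. g x)" by (rule sum_mono2) (use X in auto)
  also note sum
  finally show ?thesis using False by simp
qed

lemma card_Un_le_add: "card A \<le> a \<Longrightarrow> card B \<le> b \<Longrightarrow> card (A \<union> B) \<le> a + b"
  using card_Un_le[of A B] by linarith

definition load :: "nat \<Rightarrow> (nat set \<Rightarrow> nat set) \<Rightarrow> nat \<Rightarrow> nat" where
  "load N f a = card {p \<in> KN_edges N. a \<in> f p}"

definition fibre_card :: "nat \<Rightarrow> (nat set \<Rightarrow> nat set) \<Rightarrow> nat set \<Rightarrow> nat" where
  "fibre_card N f e = card {p \<in> KN_edges N. f p = e}"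

text \<open>A pivot y for (a, b) is a point about which f turns the edge ya into yb: a vertex placed
  at y with neighbours at a and b would have one of its edges mapped onto the other.\<close>
definition pivots :: "nat \<Rightarrow> (nat set \<Rightarrow> nat set) \<Rightarrow> nat \<Rightarrow> nat \<Rightarrow> nat set" where
  "pivots N f a b = {y \<in> {..<N}. y \<noteq> a \<and> f {y, a} = {y, b}}"

definition pivot_count :: "nat \<Rightarrow> (nat set \<Rightarrow> nat set) \<Rightarrow> nat \<Rightarrow> nat \<Rightarrow> nat" where
  "pivot_count N f a b = card (pivots N f a b)"

lemma sum_load_le:
  assumes f: "f \<in> F_N1 N"
  shows "(\<Sum>a<N. load N f a) \<le> 2 * N * N"
proof -
  have fin: "finite (SIGMA p:KN_edges N. f p)"
    using f by (auto intro!: finite_SigmaI finite_KN_edges intro: finite_subset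
                     dest: F_N1_KN_edges KN_edge_subset)
  have "(\<Sum>a<N. load N f a) = card (SIGMA a:{..<N}. {p \<in> KN_edges N. a \<in> f p})"
    by (simp add: load_def finite_KN_edges)
  also have "\<dots> \<le> card (SIGMA p:KN_edges N. f p)"
    by (rule card_inj_on_le[where f = "\<lambda>(a, p). (p, a)"]) (auto simp: inj_on_def fin)
  also have "\<dots> = (\<Sum>p\<in>KN_edges N. card (f p))"
    using f by (subst card_SigmaI)
      (auto simp: finite_KN_edges intro: finite_subset dest: F_N1_KN_edges KN_edge_subset)
  also have "\<dots> = (\<Sum>p\<in>KN_edges N. 2)"
    using f by (intro sum.cong) (auto dest: F_N1_KN_edges card_KN_edge)
  also have "\<dots> \<le> 2 * N * N" using card_KN_edges_le[of N] by simp
  finally show ?thesis .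
qed

lemma sum_fibre_card_le_load: "(\<Sum>x<N. fibre_card N f {x, a}) \<le> load N f a"
proof -
  have "(\<Sum>x<N. fibre_card N f {x, a}) = card (\<Union>x<N. {p \<in> KN_edges N. f p = {x, a}})"
    unfolding fibre_card_def
    by (rule card_UN_disjoint[symmetric]) (auto simp: finite_KN_edges doubleton_eq_iff)
  also have "\<dots> \<le> load N f a" unfolding load_def
    by (rule card_mono) (auto simp: finite_KN_edges)
  finally show ?thesis .
qed

lemma sum_pivot_count_le: "(\<Sum>b<N. pivot_count N f a b) \<le> N"
proof -
  have "(\<Sum>b<N. pivot_count N f a b) = card (\<Union>b<N. pivots N f a b)"
    unfolding pivot_count_def
    by (rule card_UN_disjoint[symmetric]) (auto simp: pivots_def doubleton_eq_iff)
  also have "\<dots> \<le> card {..<N}" by (rule card_mono) (auto simp: pivots_def)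
  finally show ?thesis by simp
qed

lemma sum_pivot_count_le_load: "(\<Sum>a<N. pivot_count N f a b) \<le> load N f b"
proof -
  have "(\<Sum>a<N. pivot_count N f a b) = card (SIGMA a:{..<N}. pivots N f a b)"
    by (simp add: pivot_count_def pivots_def)
  also have "\<dots> \<le> load N f b" unfolding load_def
  proof (rule card_inj_on_le[where f = "\<lambda>(a, y). {y, a}"])
    show "inj_on (\<lambda>(a, y). {y, a}) (SIGMA a:{..<N}. pivots N f a b)"
      by (auto simp: inj_on_def pivots_def doubleton_eq_iff) (metis doubleton_eq_iff insert_commute)
    show "(\<lambda>(a, y). {y, a}) ` (SIGMA a:{..<N}. pivots N f a b) \<subseteq> {p \<in> KN_edges N. b \<in> f p}"
      by (auto simp: pivots_def KN_edges_def)
  qed (simp add: finite_KN_edges)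
  finally show ?thesis .
qed

lemma card_heavy_load_le:
  assumes "f \<in> F_N1 N"
  shows "4 * card {x \<in> {..<N}. 8 * N < load N f x} \<le> N"
  using card_gt_mult_le[OF finite_lessThan sum_load_le[OF assms], of 4 "8 * N"] by simp

lemma card_heavy_fibre_le:
  assumes B: "finite B" and light: "\<forall>u\<in>B. load N f (\<phi> u) \<le> 8 * N"
  shows "8 * card {x \<in> {..<N}. 64 * card B < (\<Sum>u\<in>B. fibre_card N f {x, \<phi> u})} \<le> N"
proof -
  have "(\<Sum>x<N. \<Sum>u\<in>B. fibre_card N f {x, \<phi> u}) = (\<Sum>u\<in>B. \<Sum>x<N. fibre_card N f {x, \<phi> u})"
    by (rule sum.swap)
  also have "\<dots> \<le> (\<Sum>u\<in>B. load N f (\<phi> u))" by (intro sum_mono sum_fibre_card_le_load)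
  also have "\<dots> \<le> (\<Sum>u\<in>B. 8 * N)" using light by (intro sum_mono) auto
  also have "\<dots> = 8 * card B * N" by simp
  finally have "(\<Sum>x<N. \<Sum>u\<in>B. fibre_card N f {x, \<phi> u}) \<le> 8 * card B * N" .
  from card_gt_mult_le[OF finite_lessThan this, where c = 8 and t = "64 * card B"]
  show ?thesis by simp
qed

lemma card_heavy_pivot_le:
  assumes U: "finite U" and light: "\<forall>u\<in>U. load N f (\<phi> u) \<le> 8 * N"
  shows "8 * card {x \<in> {..<N}. 72 * card U <
           (\<Sum>u\<in>U. pivot_count N f (\<phi> u) x + pivot_count N f x (\<phi> u))} \<le> N"
proof -
  have "(\<Sum>x<N. \<Sum>u\<in>U. pivot_count N f (\<phi> u) x + pivot_count N f x (\<phi> u))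
      = (\<Sum>u\<in>U. (\<Sum>x<N. pivot_count N f (\<phi> u) x) + (\<Sum>x<N. pivot_count N f x (\<phi> u)))"
    by (subst sum.swap) (simp add: sum.distrib)
  also have "\<dots> \<le> (\<Sum>u\<in>U. N + 8 * N)"
    using light by (intro sum_mono add_mono sum_pivot_count_le order_trans[OF sum_pivot_count_le_load]) auto
  also have "\<dots> = 9 * card U * N" by simp
  finally have "(\<Sum>x<N. \<Sum>u\<in>U. pivot_count N f (\<phi> u) x + pivot_count N f x (\<phi> u))
                \<le> 9 * card U * N" .
  from card_gt_mult_le[OF finite_lessThan this, where c = 8 and t = "72 * card U"]
  show ?thesis by simp
qed

lemma card_UN_F_N1_le:
  assumes f: "f \<in> F_N1 N" and P: "finite P" "P \<subseteq> KN_edges N"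
  shows "card (\<Union>p\<in>P. f p) \<le> 2 * card P"
proof -
  have "card (\<Union>p\<in>P. f p) \<le> (\<Sum>p\<in>P. card (f p))" by (rule card_UN_le[OF P(1)])
  also have "\<dots> = (\<Sum>p\<in>P. 2)"
    using f P(2) by (intro sum.cong) (auto dest: F_N1_KN_edges card_KN_edge)
  finally show ?thesis by simp
qed

lemma card_Union_fibres_le:
  assumes "finite P"
  shows "card (\<Union>{q \<in> KN_edges N. f q \<in> P}) \<le> 2 * (\<Sum>p\<in>P. fibre_card N f p)"
proof -
  have "card (\<Union>{q \<in> KN_edges N. f q \<in> P}) \<le> (\<Sum>q\<in>{q \<in> KN_edges N. f q \<in> P}. card q)"
    by (rule card_Union_le_sum_card)
  also have "\<dots> = (\<Sum>q\<in>{q \<in> KN_edges N. f q \<in> P}. 2)" by (intro sum.cong) (auto simp: card_KN_edge)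
  also have "\<dots> = 2 * card {q \<in> KN_edges N. f q \<in> P}" by simp
  also have "\<dots> \<le> 2 * (\<Sum>p\<in>P. fibre_card N f p)"
  proof -
    have "{q \<in> KN_edges N. f q \<in> P} = (\<Union>p\<in>P. {q \<in> KN_edges N. f q = p})" by auto
    then show ?thesis unfolding fibre_card_def using card_UN_le[OF assms] by simp
  qed
  finally show ?thesis .
qed

lemma card_pivots_le:
  assumes "finite B"
  shows "card (\<Union>u\<in>B. \<Union>u'\<in>B - {u}. pivots N f (\<phi> u) (\<phi> u'))
           \<le> (\<Sum>u\<in>B. \<Sum>u'\<in>B - {u}. pivot_count N f (\<phi> u) (\<phi> u'))"
proof -
  have "card (\<Union>u\<in>B. \<Union>u'\<in>B - {u}. pivots N f (\<phi> u) (\<phi> u'))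
          \<le> (\<Sum>u\<in>B. card (\<Union>u'\<in>B - {u}. pivots N f (\<phi> u) (\<phi> u')))"
    by (rule card_UN_le[OF assms])
  also have "\<dots> \<le> (\<Sum>u\<in>B. \<Sum>u'\<in>B - {u}. pivot_count N f (\<phi> u) (\<phi> u'))"
    unfolding pivot_count_def using assms by (intro sum_mono card_UN_le) auto
  finally show ?thesis .
qed

section \<open>Graphs\<close>

definition nbhd :: "nat set set \<Rightarrow> nat \<Rightarrow> nat set" where
  "nbhd E v = {u. {v, u} \<in> E}"

definition degree :: "nat set set \<Rightarrow> nat \<Rightarrow> nat" where
  "degree E v = card (nbhd E v)"

definition edges_within :: "nat set set \<Rightarrow> nat set \<Rightarrow> nat set set" where
  "edges_within E U = {e \<in> E. e \<subseteq> U}"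

lemma sum_offdiag_insert:
  fixes t :: "'a \<Rightarrow> 'a \<Rightarrow> 'b::comm_monoid_add"
  assumes "finite B" "w \<notin> B"
  shows "(\<Sum>u\<in>insert w B. \<Sum>u'\<in>insert w B - {u}. t u u') =
         (\<Sum>u\<in>B. \<Sum>u'\<in>B - {u}. t u u') + (\<Sum>u\<in>B. t u w + t w u)"
proof -
  have "(\<Sum>u\<in>insert w B. \<Sum>u'\<in>insert w B - {u}. t u u') =
        (\<Sum>u'\<in>B. t w u') + (\<Sum>u\<in>B. \<Sum>u'\<in>insert w B - {u}. t u u')"
    using assms by (simp add: Diff_insert_absorb)
  also have "(\<Sum>u\<in>B. \<Sum>u'\<in>insert w B - {u}. t u u') = (\<Sum>u\<in>B. t u w + (\<Sum>u'\<in>B - {u}. t u u'))"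
  proof (rule sum.cong)
    fix u assume "u \<in> B"
    then have "insert w B - {u} = insert w (B - {u})" "w \<notin> B - {u}" using assms by auto
    then show "(\<Sum>u'\<in>insert w B - {u}. t u u') = t u w + (\<Sum>u'\<in>B - {u}. t u u')"
      using assms by simp
  qed simp
  finally show ?thesis by (simp add: sum.distrib ac_simps)
qed

context
  fixes V :: "nat set" and E :: "nat set set"
  assumes G: "is_graph V E"
begin

lemma finite_vertices: "finite V"
  using G by (simp add: is_graph_def)

lemma finite_edges: "finite E"
  using G finite_vertices by (auto simp: is_graph_def intro: finite_subset[of _ "Pow V"])

lemma edgeD: "e \<in> E \<Longrightarrow> card e = 2 \<and> e \<subseteq> V"
  using G by (simp add: is_graph_def)

lemma finite_nbhd: "finite (nbhd E v)"
  by (rule finite_subset[OF _ finite_vertices]) (auto simp: nbhd_def dest: edgeD)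

lemma sum_degree_le:
  assumes "U \<subseteq> V"
  shows "(\<Sum>v\<in>U. degree E v) \<le> 2 * card E"
proof -
  have finite_incidences: "finite (SIGMA e:E. e)"
    using finite_edges edgeD by (intro finite_SigmaI) (auto intro: card_ge_0_finite)
  have "(\<Sum>v\<in>U. degree E v) = card (SIGMA v:U. nbhd E v)"
    using assms finite_vertices by (simp add: degree_def finite_nbhd finite_subset)
  also have "\<dots> \<le> card (SIGMA e:E. e)"
    by (rule card_inj_on_le[where f = "\<lambda>(v, u). ({v, u}, v)"])
      (auto simp: inj_on_def doubleton_eq_iff nbhd_def finite_incidences)
  also have "\<dots> = (\<Sum>e\<in>E. card e)"
    using finite_edges edgeD by (subst card_SigmaI) (auto intro: card_ge_0_finite)
  also have "\<dots> = (\<Sum>e\<in>E. 2)" by (rule sum.cong) (auto dest: edgeD)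
  finally show ?thesis by simp
qed

lemma card_mult_min_degree_le:
  assumes "U \<subseteq> V" "\<forall>u\<in>U. d \<le> degree E u"
  shows "card U * d \<le> 2 * card E"
proof -
  have "card U * d = (\<Sum>u\<in>U. d)" by simp
  also have "\<dots> \<le> (\<Sum>u\<in>U. degree E u)" using assms by (intro sum_mono) auto
  also have "\<dots> \<le> 2 * card E" using sum_degree_le assms by simp
  finally show ?thesis .
qed

lemma degree_pos:
  assumes "no_isolated V E" "v \<in> V"
  shows "0 < degree E v"
proof -
  obtain e where e: "e \<in> E" "v \<in> e" using assms by (auto simp: no_isolated_def)
  then obtain u where "e = {v, u}"
    using edgeD[OF e(1)] by (auto simp: card_2_iff doubleton_eq_iff)
  then have "u \<in> nbhd E v" using e by (simp add: nbhd_def)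
  then show ?thesis using finite_nbhd by (auto simp: degree_def card_gt_0_iff)
qed

lemma card_vertices_le: "no_isolated V E \<Longrightarrow> card V \<le> 2 * card E"
  using card_mult_min_degree_le[of V 1] degree_pos by (simp add: Suc_le_eq)

lemma finite_edges_within: "finite (edges_within E U)"
  using finite_edges by (simp add: edges_within_def)

lemma card_edges_within_le: "card (edges_within E U) \<le> card E"
  using finite_edges by (auto simp: edges_within_def intro: card_mono)

lemma edges_within_insert:
  assumes "w \<notin> U"
  shows "edges_within E (insert w U) = edges_within E U \<union> (\<lambda>u. {w, u}) ` (nbhd E w \<inter> U)"
proof
  show "edges_within E (insert w U) \<subseteq> edges_within E U \<union> (\<lambda>u. {w, u}) ` (nbhd E w \<inter> U)"
  proof
    fix e assume "e \<in> edges_within E (insert w U)"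
    then have e: "e \<in> E" "e \<subseteq> insert w U" by (auto simp: edges_within_def)
    show "e \<in> edges_within E U \<union> (\<lambda>u. {w, u}) ` (nbhd E w \<inter> U)"
    proof (cases "w \<in> e")
      case True
      then obtain u where "e = {w, u}" "u \<noteq> w"
        using edgeD[OF e(1)] by (auto simp: card_2_iff doubleton_eq_iff)
      then show ?thesis using e by (auto simp: nbhd_def)
    qed (use e in \<open>auto simp: edges_within_def\<close>)
  qed
qed (auto simp: edges_within_def nbhd_def)

lemma card_edges_within_insert:
  assumes "w \<notin> U" "finite U"
  shows "card (edges_within E (insert w U)) = card (edges_within E U) + card (nbhd E w \<inter> U)"
proof -
  have "inj_on (\<lambda>u. {w, u}) (nbhd E w \<inter> U)" by (auto simp: inj_on_def doubleton_eq_iff)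
  moreover have "edges_within E U \<inter> (\<lambda>u. {w, u}) ` (nbhd E w \<inter> U) = {}"
    using assms(1) by (auto simp: edges_within_def)
  ultimately show ?thesis
    using assms finite_edges_within
    by (simp add: edges_within_insert card_Un_disjoint card_image)
qed

lemma sum_edges_within_insert:
  assumes "w \<notin> U" "finite U"
  shows "(\<Sum>e\<in>edges_within E (insert w U). h (\<phi>(w := x) ` e)) =
         (\<Sum>e\<in>edges_within E U. h (\<phi> ` e)) + (\<Sum>u\<in>nbhd E w \<inter> U. h {x, \<phi> u})"
proof -
  have "(\<Sum>e\<in>edges_within E (insert w U). h (\<phi>(w := x) ` e)) =
        (\<Sum>e\<in>edges_within E U. h (\<phi>(w := x) ` e)) +
        (\<Sum>e\<in>(\<lambda>u. {w, u}) ` (nbhd E w \<inter> U). h (\<phi>(w := x) ` e))"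
    unfolding edges_within_insert[OF assms(1)] using assms finite_edges_within
    by (intro sum.union_disjoint) (auto simp: edges_within_def)
  also have "(\<Sum>e\<in>edges_within E U. h (\<phi>(w := x) ` e)) = (\<Sum>e\<in>edges_within E U. h (\<phi> ` e))"
    using assms(1) by (intro sum.cong refl arg_cong[where f = h] image_cong)
      (auto simp: edges_within_def)
  also have "(\<Sum>e\<in>(\<lambda>u. {w, u}) ` (nbhd E w \<inter> U). h (\<phi>(w := x) ` e)) =
             (\<Sum>u\<in>nbhd E w \<inter> U. h {x, \<phi> u})"
  proof -
    have "\<phi>(w := x) ` {w, u} = {x, \<phi> u}" if "u \<in> U" for u using that assms(1) by auto
    then show ?thesis by (subst sum.reindex) (auto simp: inj_on_def doubleton_eq_iff intro!: sum.cong)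
  qed
  finally show ?thesis .
qed

end

section \<open>The greedy embedding\<close>

definition mapped_edges :: "nat set set \<Rightarrow> nat set \<Rightarrow> (nat \<Rightarrow> nat) \<Rightarrow> nat set set" where
  "mapped_edges E U \<phi> = (\<lambda>e. \<phi> ` e) ` edges_within E U"

definition pivot_weight ::
    "nat \<Rightarrow> (nat set \<Rightarrow> nat set) \<Rightarrow> nat set set \<Rightarrow> (nat \<Rightarrow> nat) \<Rightarrow> nat set \<Rightarrow> nat \<Rightarrow> nat" where
  "pivot_weight N f E \<phi> U v =
     (\<Sum>u\<in>nbhd E v \<inter> U. \<Sum>u'\<in>nbhd E v \<inter> U - {u}. pivot_count N f (\<phi> u) (\<phi> u'))"

definition greedy_inv ::
    "nat \<Rightarrow> (nat set \<Rightarrow> nat set) \<Rightarrow> nat set \<Rightarrow> nat set set \<Rightarrow> nat set \<Rightarrow> (nat \<Rightarrow> nat) \<Rightarrow> bool" where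
  "greedy_inv N f V E U \<phi> \<longleftrightarrow> U \<subseteq> V \<and> inj_on \<phi> U \<and> \<phi> ` U \<subseteq> {..<N} \<and>
     (\<forall>u\<in>U. load N f (\<phi> u) \<le> 8 * N) \<and>
     (\<forall>p\<in>mapped_edges E U \<phi>. f p \<notin> mapped_edges E U \<phi>) \<and>
     (\<Sum>e\<in>edges_within E U. fibre_card N f (\<phi> ` e)) \<le> 64 * card (edges_within E U) \<and>
     (\<forall>v\<in>V - U. degree E v * pivot_weight N f E \<phi> U v \<le> 144 * card E * card (nbhd E v \<inter> U)) \<and>
     (\<forall>u\<in>U. \<forall>v\<in>V - U. degree E v \<le> degree E u)"

text \<open>The candidates x ruled out for the image of the next vertex w: used points, points of
  high load, points whose new edges would have large fibres or raise pivot weights too much,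
  and the points that would create a conflict between an old and a new edge (in either order)
  or between two new edges.\<close>
definition excluded ::
    "nat \<Rightarrow> (nat set \<Rightarrow> nat set) \<Rightarrow> nat set set \<Rightarrow> nat set \<Rightarrow> (nat \<Rightarrow> nat) \<Rightarrow> nat \<Rightarrow> nat set" where
  "excluded N f E U \<phi> w =
     \<phi> ` U
   \<union> {x \<in> {..<N}. 8 * N < load N f x}
   \<union> {x \<in> {..<N}. 64 * card (nbhd E w \<inter> U) < (\<Sum>u\<in>nbhd E w \<inter> U. fibre_card N f {x, \<phi> u})}
   \<union> {x \<in> {..<N}. 72 * card U < (\<Sum>u\<in>U. pivot_count N f (\<phi> u) x + pivot_count N f x (\<phi> u))}
   \<union> (\<Union>p\<in>mapped_edges E U \<phi>. f p)
   \<union> \<Union>{q \<in> KN_edges N. f q \<in> mapped_edges E U \<phi>}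
   \<union> (\<Union>u\<in>nbhd E w \<inter> U. \<Union>u'\<in>nbhd E w \<inter> U - {u}. pivots N f (\<phi> u) (\<phi> u'))"

lemma greedy_inv_empty:
  assumes "is_graph V E"
  shows "greedy_inv N f V E {} \<phi>"
proof -
  have "edges_within E {} = {}" using edgeD[OF assms] by (fastforce simp: edges_within_def)
  then show ?thesis by (simp add: greedy_inv_def mapped_edges_def pivot_weight_def)
qed

lemma mapped_edges_subset_KN_edges:
  assumes "is_graph V E" "inj_on \<phi> U" "\<phi> ` U \<subseteq> {..<N}"
  shows "mapped_edges E U \<phi> \<subseteq> KN_edges N"
proof
  fix p assume "p \<in> mapped_edges E U \<phi>"
  then obtain e where e: "e \<in> E" "e \<subseteq> U" "p = \<phi> ` e"
    by (auto simp: mapped_edges_def edges_within_def)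
  have "card p = 2"
    using edgeD[OF assms(1) e(1)] e(2,3) inj_on_subset[OF assms(2)] by (simp add: card_image)
  then show "p \<in> KN_edges N" using assms(3) e by (auto simp: KN_edges_def)
qed

lemma mapped_edges_insert:
  assumes "is_graph V E" "w \<notin> U"
  shows "mapped_edges E (insert w U) (\<phi>(w := x)) =
         mapped_edges E U \<phi> \<union> (\<lambda>u. {x, \<phi> u}) ` (nbhd E w \<inter> U)"
proof -
  have "(\<lambda>e. \<phi>(w := x) ` e) ` edges_within E U = mapped_edges E U \<phi>"
    unfolding mapped_edges_def using assms(2)
    by (intro image_cong refl) (auto simp: edges_within_def)
  moreover have "(\<lambda>e. \<phi>(w := x) ` e) ` (\<lambda>u. {w, u}) ` (nbhd E w \<inter> U) =
                 (\<lambda>u. {x, \<phi> u}) ` (nbhd E w \<inter> U)"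
    using assms(2) by (auto simp: image_image intro!: image_cong)
  ultimately show ?thesis
    by (simp add: mapped_edges_def edges_within_insert[OF assms] image_Un)
qed

lemma conflict_free_insert:
  assumes f: "f \<in> F_N1 N" and G: "is_graph V E" and w: "w \<notin> U"
    and img: "\<phi> ` U \<subseteq> {..<N}" and x: "x < N" "x \<notin> \<phi> ` U"
    and old: "\<forall>p\<in>mapped_edges E U \<phi>. f p \<notin> mapped_edges E U \<phi>"
    and not_covered: "\<forall>p\<in>mapped_edges E U \<phi>. x \<notin> f p"
    and not_onto_old: "\<forall>q\<in>KN_edges N. f q \<in> mapped_edges E U \<phi> \<longrightarrow> x \<notin> q"
    and not_pivot: "\<forall>u\<in>nbhd E w \<inter> U. \<forall>u'\<in>nbhd E w \<inter> U - {u}. x \<notin> pivots N f (\<phi> u) (\<phi> u')"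
  shows "\<forall>p\<in>mapped_edges E (insert w U) (\<phi>(w := x)).
           f p \<notin> mapped_edges E (insert w U) (\<phi>(w := x))"
proof -
  have new_KN: "{x, \<phi> u} \<in> KN_edges N" if "u \<in> U" for u
    using that img x by (intro doubleton_in_KN_edges) auto
  have new_old: "f {x, \<phi> u} \<notin> mapped_edges E U \<phi>" if "u \<in> U" for u
    using not_onto_old new_KN[OF that] by auto
  have new_new: "f {x, \<phi> u} \<noteq> {x, \<phi> u'}" if "u \<in> nbhd E w \<inter> U" "u' \<in> nbhd E w \<inter> U" for u u'
  proof (cases "u = u'")
    case True
    then show ?thesis using F_N1_neq[OF f new_KN] that by simp
  next
    case False
    then show ?thesis using not_pivot that x by (auto simp: pivots_def)
  qed
  show ?thesis
    unfolding mapped_edges_insert[OF G w] using old not_covered new_old new_new by fastforce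
qed

lemma pivot_weight_insert:
  assumes "finite U" "w \<notin> U"
  shows "pivot_weight N f E (\<phi>(w := x)) (insert w U) v = pivot_weight N f E \<phi> U v +
     (if w \<in> nbhd E v
      then (\<Sum>u\<in>nbhd E v \<inter> U. pivot_count N f (\<phi> u) x + pivot_count N f x (\<phi> u)) else 0)"
proof (cases "w \<in> nbhd E v")
  case True
  let ?B = "nbhd E v \<inter> U" and ?c = "\<lambda>u u'. pivot_count N f ((\<phi>(w := x)) u) ((\<phi>(w := x)) u')"
  have "nbhd E v \<inter> insert w U = insert w ?B" using True by auto
  then have "pivot_weight N f E (\<phi>(w := x)) (insert w U) v =
             (\<Sum>u\<in>insert w ?B. \<Sum>u'\<in>insert w ?B - {u}. ?c u u')"
    by (simp add: pivot_weight_def)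
  also have "\<dots> = (\<Sum>u\<in>?B. \<Sum>u'\<in>?B - {u}. ?c u u') + (\<Sum>u\<in>?B. ?c u w + ?c w u)"
    using assms by (intro sum_offdiag_insert) auto
  also have "\<dots> = pivot_weight N f E \<phi> U v +
                   (\<Sum>u\<in>?B. pivot_count N f (\<phi> u) x + pivot_count N f x (\<phi> u))"
    unfolding pivot_weight_def using assms(2)
    by (intro arg_cong2[where f = "(+)"] sum.cong refl) auto
  finally show ?thesis using True by simp
next
  case False
  then have "nbhd E v \<inter> insert w U = nbhd E v \<inter> U" by auto
  then show ?thesis
    using False unfolding pivot_weight_def
    by (simp, intro sum.cong refl) (use assms(2) in \<open>auto simp: fun_upd_other\<close>)
qed

lemma degree_pivot_weight_insert_le:
  assumes U: "finite U" "w \<notin> U"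
    and old: "degree E v * pivot_weight N f E \<phi> U v \<le> 144 * card E * card (nbhd E v \<inter> U)"
    and deg: "degree E v * card U \<le> 2 * card E"
    and x: "(\<Sum>u\<in>U. pivot_count N f (\<phi> u) x + pivot_count N f x (\<phi> u)) \<le> 72 * card U"
  shows "degree E v * pivot_weight N f E (\<phi>(w := x)) (insert w U) v
           \<le> 144 * card E * card (nbhd E v \<inter> insert w U)"
proof (cases "w \<in> nbhd E v")
  case True
  let ?S = "\<Sum>u\<in>nbhd E v \<inter> U. pivot_count N f (\<phi> u) x + pivot_count N f x (\<phi> u)"
  have "?S \<le> 72 * card U" by (rule order_trans[OF sum_mono2 x]) (use U in auto)
  then have "degree E v * ?S \<le> 72 * (degree E v * card U)" by simp
  also have "\<dots> \<le> 144 * card E" using deg by (simp add: mult.commute)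
  finally have "degree E v * ?S \<le> 144 * card E" .
  moreover have "card (nbhd E v \<inter> insert w U) = card (nbhd E v \<inter> U) + 1"
    using True U by (simp add: Int_insert_right)
  ultimately show ?thesis
    using True old by (simp add: pivot_weight_insert[OF U] distrib_left)
next
  case False
  then show ?thesis using old by (simp add: pivot_weight_insert[OF U] Int_insert_right)
qed

lemma greedy_inv_insert:
  assumes f: "f \<in> F_N1 N" and G: "is_graph V E"
    and inv: "greedy_inv N f V E U \<phi>" and w: "w \<in> V - U"
    and w_max: "\<forall>v\<in>V - U. degree E v \<le> degree E w"
    and x: "x < N" "x \<notin> excluded N f E U \<phi> w"
  shows "greedy_inv N f V E (insert w U) (\<phi>(w := x))"
proof -
  have UV: "U \<subseteq> V" and inj: "inj_on \<phi> U" and img: "\<phi> ` U \<subseteq> {..<N}"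
    and light: "\<forall>u\<in>U. load N f (\<phi> u) \<le> 8 * N"
    and conflict_free: "\<forall>p\<in>mapped_edges E U \<phi>. f p \<notin> mapped_edges E U \<phi>"
    and fibres: "(\<Sum>e\<in>edges_within E U. fibre_card N f (\<phi> ` e)) \<le> 64 * card (edges_within E U)"
    and weights: "\<forall>v\<in>V - U. degree E v * pivot_weight N f E \<phi> U v
                              \<le> 144 * card E * card (nbhd E v \<inter> U)"
    and order: "\<forall>u\<in>U. \<forall>v\<in>V - U. degree E v \<le> degree E u"
    using inv by (auto simp: greedy_inv_def)
  have wU: "w \<notin> U" using w by simp
  have U: "finite U" using UV finite_vertices[OF G] by (rule finite_subset)
  have fibres_w: "(\<Sum>u\<in>nbhd E w \<inter> U. fibre_card N f {x, \<phi> u}) \<le> 64 * card (nbhd E w \<inter> U)"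
    and weight_x: "(\<Sum>u\<in>U. pivot_count N f (\<phi> u) x + pivot_count N f x (\<phi> u)) \<le> 72 * card U"
    using x by (auto simp: excluded_def)
  have deg: "degree E v * card U \<le> 2 * card E" if "v \<in> V - insert w U" for v
  proof -
    have "card (insert w U) * degree E v \<le> 2 * card E"
      using that w w_max order UV by (intro card_mult_min_degree_le[OF G]) (auto intro: order_trans)
    then show ?thesis using U wU by (simp add: mult.commute)
  qed
  have "\<forall>p\<in>mapped_edges E (insert w U) (\<phi>(w := x)).
          f p \<notin> mapped_edges E (insert w U) (\<phi>(w := x))"
    using x by (intro conflict_free_insert[OF f G wU img x(1) _ conflict_free])
      (auto simp: excluded_def)
  moreover have "(\<Sum>e\<in>edges_within E (insert w U). fibre_card N f (\<phi>(w := x) ` e))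
                   \<le> 64 * card (edges_within E (insert w U))"
    unfolding sum_edges_within_insert[OF G wU U] card_edges_within_insert[OF G wU U]
    using fibres fibres_w by (simp add: distrib_left)
  moreover have "\<forall>v\<in>V - insert w U. degree E v * pivot_weight N f E (\<phi>(w := x)) (insert w U) v
                   \<le> 144 * card E * card (nbhd E v \<inter> insert w U)"
    using weights deg weight_x by (auto intro!: degree_pivot_weight_insert_le[OF U wU])
  moreover have "inj_on (\<phi>(w := x)) (insert w U)"
    using inj x wU by (auto simp: excluded_def inj_on_def)
  ultimately show ?thesis
    using UV w img x light order w_max wU by (auto simp: greedy_inv_def excluded_def)
qed

lemma excluded_subset:
  assumes f: "f \<in> F_N1 N" and G: "is_graph V E" and inv: "greedy_inv N f V E U \<phi>"
  shows "excluded N f E U \<phi> w \<subseteq> {..<N}"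
proof -
  have "mapped_edges E U \<phi> \<subseteq> KN_edges N"
    using inv by (intro mapped_edges_subset_KN_edges[OF G]) (auto simp: greedy_inv_def)
  then have "\<forall>p\<in>mapped_edges E U \<phi>. f p \<subseteq> {..<N}"
    using F_N1_KN_edges[OF f] KN_edge_subset by blast
  then show ?thesis
    using inv by (auto simp: excluded_def greedy_inv_def pivots_def KN_edges_def)
qed

lemma card_UN_mapped_edges_le:
  assumes f: "f \<in> F_N1 N" and G: "is_graph V E" and "inj_on \<phi> U" "\<phi> ` U \<subseteq> {..<N}"
  shows "card (\<Union>p\<in>mapped_edges E U \<phi>. f p) \<le> 2 * card E"
proof -
  have "card (mapped_edges E U \<phi>) \<le> card E"
    unfolding mapped_edges_def
    using card_image_le[OF finite_edges_within[OF G]] card_edges_within_le[OF G] le_trans by blast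
  moreover have "finite (mapped_edges E U \<phi>)"
    by (simp add: mapped_edges_def finite_edges_within[OF G])
  ultimately show ?thesis
    using card_UN_F_N1_le[OF f _ mapped_edges_subset_KN_edges[OF G assms(3,4)]] by fastforce
qed

lemma card_onto_mapped_edges_le:
  assumes G: "is_graph V E"
    and fibres: "(\<Sum>e\<in>edges_within E U. fibre_card N f (\<phi> ` e)) \<le> 64 * card (edges_within E U)"
  shows "card (\<Union>{q \<in> KN_edges N. f q \<in> mapped_edges E U \<phi>}) \<le> 128 * card E"
proof -
  have finite_mapped: "finite (mapped_edges E U \<phi>)"
    by (simp add: mapped_edges_def finite_edges_within[OF G])
  have "(\<Sum>p\<in>mapped_edges E U \<phi>. fibre_card N f p) \<le> (\<Sum>e\<in>edges_within E U. fibre_card N f (\<phi> ` e))"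
    unfolding mapped_edges_def
    using sum_image_le[OF finite_edges_within[OF G], where g = "fibre_card N f" and f = "\<lambda>e. \<phi> ` e"]
    by (simp add: comp_def)
  then show ?thesis
    using card_Union_fibres_le[OF finite_mapped, of N f] fibres card_edges_within_le[OF G, of U]
    by linarith
qed

lemma card_pivots_le_card_edges:
  assumes G: "is_graph V E" and U: "finite U" and deg: "0 < degree E w"
    and weight: "degree E w * pivot_weight N f E \<phi> U w \<le> 144 * card E * card (nbhd E w \<inter> U)"
  shows "card (\<Union>u\<in>nbhd E w \<inter> U. \<Union>u'\<in>nbhd E w \<inter> U - {u}. pivots N f (\<phi> u) (\<phi> u'))
           \<le> 144 * card E"
proof -
  have "card (nbhd E w \<inter> U) \<le> degree E w"
    unfolding degree_def by (rule card_mono[OF finite_nbhd[OF G]]) simp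
  then have "144 * card E * card (nbhd E w \<inter> U) \<le> degree E w * (144 * card E)" by simp
  with weight have "degree E w * pivot_weight N f E \<phi> U w \<le> degree E w * (144 * card E)"
    by (rule order_trans)
  then have "pivot_weight N f E \<phi> U w \<le> 144 * card E" using deg by simp
  then show ?thesis
    using card_pivots_le[of "nbhd E w \<inter> U" N f \<phi>] U unfolding pivot_weight_def by simp
qed

lemma card_excluded_less:
  assumes f: "f \<in> F_N1 N" and G: "is_graph V E" and ni: "no_isolated V E"
    and N: "N = 600 * card E"
    and inv: "greedy_inv N f V E U \<phi>" and w: "w \<in> V - U"
    and w_max: "\<forall>v\<in>V - U. degree E v \<le> degree E w"
  shows "card (excluded N f E U \<phi> w) < N"
proof -
  let ?m = "card E" and ?B = "nbhd E w \<inter> U"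
  have UV: "U \<subseteq> V" and inj: "inj_on \<phi> U" and img: "\<phi> ` U \<subseteq> {..<N}"
    and light: "\<forall>u\<in>U. load N f (\<phi> u) \<le> 8 * N"
    and fibres: "(\<Sum>e\<in>edges_within E U. fibre_card N f (\<phi> ` e)) \<le> 64 * card (edges_within E U)"
    and weight_w: "degree E w * pivot_weight N f E \<phi> U w \<le> 144 * ?m * card ?B"
    using inv w by (auto simp: greedy_inv_def)
  have U: "finite U" using UV finite_vertices[OF G] by (rule finite_subset)
  have deg_w: "0 < degree E w" using degree_pos[OF G ni] w by simp
  then have m: "0 < ?m" using sum_degree_le[OF G, of "{w}"] w by simp
  have "card (excluded N f E U \<phi> w) \<le> 2*?m + 150*?m + 75*?m + 75*?m + 2*?m + 128*?m + 144*?m"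
    unfolding excluded_def
  proof (intro card_Un_le_add)
    show "card (\<phi> ` U) \<le> 2 * ?m"
      using card_image_le[OF U, of \<phi>] card_mono[OF finite_vertices[OF G] UV]
        card_vertices_le[OF G ni] by linarith
    show "card {x \<in> {..<N}. 8 * N < load N f x} \<le> 150 * ?m"
      using card_heavy_load_le[OF f] N by linarith
    show "card {x \<in> {..<N}. 64 * card ?B < (\<Sum>u\<in>?B. fibre_card N f {x, \<phi> u})} \<le> 75 * ?m"
      using card_heavy_fibre_le[of ?B N f \<phi>] U light N by (simp add: finite_Int)
    show "card {x \<in> {..<N}. 72 * card U <
            (\<Sum>u\<in>U. pivot_count N f (\<phi> u) x + pivot_count N f x (\<phi> u))} \<le> 75 * ?m"
      using card_heavy_pivot_le[OF U light] N by linarith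
    show "card (\<Union>p\<in>mapped_edges E U \<phi>. f p) \<le> 2 * ?m"
      by (rule card_UN_mapped_edges_le[OF f G inj img])
    show "card (\<Union>{q \<in> KN_edges N. f q \<in> mapped_edges E U \<phi>}) \<le> 128 * ?m"
      by (rule card_onto_mapped_edges_le[OF G fibres])
    show "card (\<Union>u\<in>?B. \<Union>u'\<in>?B - {u}. pivots N f (\<phi> u) (\<phi> u')) \<le> 144 * ?m"
      by (rule card_pivots_le_card_edges[OF G U deg_w weight_w])
  qed
  then show ?thesis using N m by linarith
qed

lemma greedy_inv_step:
  assumes f: "f \<in> F_N1 N" and G: "is_graph V E" and ni: "no_isolated V E"
    and N: "N = 600 * card E"
    and inv: "greedy_inv N f V E U \<phi>" and UV: "U \<noteq> V"
  shows "\<exists>w \<psi>. w \<in> V - U \<and> greedy_inv N f V E (insert w U) \<psi>"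
proof -
  have fin: "finite (V - U)" using finite_vertices[OF G] by simp
  have "V - U \<noteq> {}" using inv UV by (auto simp: greedy_inv_def)
  then have "Max (degree E ` (V - U)) \<in> degree E ` (V - U)" using fin by (intro Max_in) auto
  then obtain w where w: "w \<in> V - U" and "degree E w = Max (degree E ` (V - U))" by auto
  then have w_max: "\<forall>v\<in>V - U. degree E v \<le> degree E w" using fin by simp
  have "\<not> {..<N} \<subseteq> excluded N f E U \<phi> w"
  proof
    assume "{..<N} \<subseteq> excluded N f E U \<phi> w"
    then have "excluded N f E U \<phi> w = {..<N}" using excluded_subset[OF f G inv] by blast
    then show False using card_excluded_less[OF f G ni N inv w w_max] by simp
  qed
  then obtain x where "x < N" "x \<notin> excluded N f E U \<phi> w" by auto
  then show ?thesis using greedy_inv_insert[OF f G inv w w_max] w by blast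
qed

lemma greedy_inv_exists:
  assumes f: "f \<in> F_N1 N" and G: "is_graph V E" and ni: "no_isolated V E"
    and N: "N = 600 * card E"
  shows "k \<le> card V \<Longrightarrow> \<exists>U \<phi>. card U = k \<and> greedy_inv N f V E U \<phi>"
proof (induction k)
  case 0
  then show ?case using greedy_inv_empty[OF G] card.empty by blast
next
  case (Suc k)
  then obtain U \<phi> where U: "card U = k" "greedy_inv N f V E U \<phi>" by auto
  then have "U \<noteq> V" using Suc.prems by auto
  then obtain w \<psi> where w: "w \<in> V - U" "greedy_inv N f V E (insert w U) \<psi>"
    using greedy_inv_step[OF f G ni N U(2)] by blast
  have "finite U"
    using U(2) finite_vertices[OF G] by (auto simp: greedy_inv_def intro: finite_subset)
  then have "card (insert w U) = Suc k" using w(1) U(1) by simp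
  then show ?case using w(2) by blast
qed

lemma g1_good_600_card_edges:
  assumes "is_graph V E" "no_isolated V E"
  shows "g1_good V E (600 * card E)"
  unfolding g1_good_def
proof
  fix f assume f: "f \<in> F_N1 (600 * card E)"
  obtain U \<phi> where U: "card U = card V" "greedy_inv (600 * card E) f V E U \<phi>"
    using greedy_inv_exists[OF f assms refl order_refl] by blast
  then have "U = V"
    using card_subset_eq[OF finite_vertices[OF assms(1)]] by (auto simp: greedy_inv_def)
  moreover have "edges_within E V = E" using edgeD[OF assms(1)] by (auto simp: edges_within_def)
  ultimately show "\<exists>\<phi>. inj_on \<phi> V \<and> \<phi> ` V \<subseteq> {..<600 * card E} \<and>
      (\<forall>e\<in>image \<phi> ` E. f e \<notin> image \<phi> ` E)"
    using U(2) by (auto simp: greedy_inv_def mapped_edges_def)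
qed

theorem theorem3p6:
  shows "\<exists>C::real. \<forall>V E. is_graph V E \<and> no_isolated V E \<longrightarrow>
           (\<exists>N. g1_good V E N) \<and> real (g1 V E) \<le> C * real (card E)"
proof (intro exI[of _ 600] allI impI)
  fix V E assume "is_graph V E \<and> no_isolated V E"
  then have good: "g1_good V E (600 * card E)" by (simp add: g1_good_600_card_edges)
  then have "g1 V E \<le> 600 * card E" unfolding g1_def by (rule Least_le)
  then show "(\<exists>N. g1_good V E N) \<and> real (g1 V E) \<le> 600 * real (card E)"
    using good by (auto dest: of_nat_mono)
qed

end
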